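(* Let $\epsilon\in(0,1)$ and let $r=r(n)$ be any function with $r=o(\sqrt{\log n})$. Then for every $n$ there is a finite collection of linear equations $C_1,\dots,C_m$ over the dihedral group $\mathbf{D}_3$ on the variables $x_1,\dots,x_n$ such that every $(1\pm\epsilon)$ code sparsifier of $C_1,\dots,C_m$ has size at least $n^{r-o(1)}$. In particular (taking $r\to\infty$ slowly), there are such collections over a group of constant size for which every $(1\pm\epsilon)$ code sparsifier has size $n^{\omega(1)}=\log^{\omega(1)}(|\mathbf{D}_3^n|)$.
   Context: $\mathbf{D}_3$ is the dihedral group of order 6 (non-abelian). For a group $G$, a linear equation over $G$ on variables $x_1,\dots,x_n\in\{0,1\}$ is a map $C:\{0,1\}^n\to G$ of the form $C(x)=a_1^{x_1}a_2^{x_2}\cdots a_n^{x_n}$ with $a_1,\dots,a_n\in G$ (the product taken in this order, $a^0=1$). Given linear equations $C_1,\dots,C_m$, a $(1\pm\epsilon)$ code sparsifier is a subset $S\subseteq[m]$ with weights $w_i>0$ ($i\in S$) such that for every $x\in\{0,1\}^n$, $(1-\epsilon)\sum_{i\in[m]}\mathbf 1[C_i(x)\ne1]\le\sum_{i\in S}w_i\mathbf 1[C_i(x)\ne1]\le(1+\epsilon)\sum_{i\in[m]}\mathbf 1[C_i(x)\ne1]$; its size is $|S|$. *)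

theory Defs
  imports Complex_Main "HOL-Library.Numeral_Type" "HOL-Library.Landau_Symbols"
begin

text \<open>The dihedral group D_3 of order 6: element (k, s) stands for rho^k sigma^s,
  where rho is a rotation of order 3 (k in Z/3) and sigma a reflection (s = True).
  Multiplication: rho^a sigma^s * rho^b sigma^t = rho^(a + (-1)^s b) sigma^(s+t).\<close>
type_synonym D3 = "3 \<times> bool"

definition d3_one :: D3 where "d3_one = (0, False)"

definition d3_mult :: "D3 \<Rightarrow> D3 \<Rightarrow> D3" where
  "d3_mult g h = (fst g + (if snd g then - fst h else fst h), snd g \<noteq> snd h)"

definition d3_pow01 :: "D3 \<Rightarrow> bool \<Rightarrow> D3" where
  "d3_pow01 a x = (if x then a else d3_one)"

definition lin_eq_val :: "nat \<Rightarrow> (nat \<Rightarrow> D3) \<Rightarrow> (nat \<Rightarrow> bool) \<Rightarrow> D3" where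
  "lin_eq_val n a x = foldr (\<lambda>j acc. d3_mult (d3_pow01 (a j) (x j)) acc) [0..<n] d3_one"

definition unsat_count :: "nat \<Rightarrow> nat \<Rightarrow> (nat \<Rightarrow> nat \<Rightarrow> D3) \<Rightarrow> (nat \<Rightarrow> bool) \<Rightarrow> real" where
  "unsat_count n m C x = real (card {i \<in> {..<m}. lin_eq_val n (C i) x \<noteq> d3_one})"

definition code_sparsifier ::
  "real \<Rightarrow> nat \<Rightarrow> nat \<Rightarrow> (nat \<Rightarrow> nat \<Rightarrow> D3) \<Rightarrow> nat set \<Rightarrow> (nat \<Rightarrow> real) \<Rightarrow> bool" where
  "code_sparsifier eps n m C S w \<longleftrightarrow>
     S \<subseteq> {..<m} \<and> (\<forall>i\<in>S. w i > 0) \<and>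
     (\<forall>x :: nat \<Rightarrow> bool. (\<forall>j. j \<ge> n \<longrightarrow> \<not> x j) \<longrightarrow>
        (1 - eps) * unsat_count n m C x
          \<le> (\<Sum>i\<in>S. w i * (if lin_eq_val n (C i) x \<noteq> d3_one then 1 else 0)) \<and>
        (\<Sum>i\<in>S. w i * (if lin_eq_val n (C i) x \<noteq> d3_one then 1 else 0))
          \<le> (1 + eps) * unsat_count n m C x)"

end

theory Submission
  imports Defs "HOL-Real_Asymp.Real_Asymp"
begin

text \<open>Barrington's commutator trick over D3: since sig rho sig rho^-1 = rho, a product of
  3 * 2^k - 2 conditional group elements, each switched on by one of the bits 0..k, equals rho
  when all these bits are set and 1 otherwise. Write the indices i < N^(k+1) in base N and give
  every instruction of this program a block of N variables that one-hot encodes a digit;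
  equation i places the instruction's element at the position of its own digit. At the
  assignment encoding i, equation i' then evaluates the program on "the digits of i and i' agree",
  so it is violated iff i' = i. Hence every equation is the only one violated somewhere, and a
  sparsifier must keep all N^(k+1) of them. With k = floor (sqrt (ln n)) and N = n div (3 * 2^k - 2),
  which is at least sqrt n, this is at least n^(sqrt (ln n) / 2), exceeding n^(r n) for large n.\<close>

definition rho :: D3 where "rho = (1, False)"
definition sig :: D3 where "sig = (0, True)"
definition d3_inv :: "D3 \<Rightarrow> D3" where "d3_inv a = (if snd a then a else (- fst a, False))"

interpretation d3: group d3_mult d3_one d3_inv
  by unfold_locales (auto simp: d3_mult_def d3_one_def d3_inv_def algebra_simps)

interpretation d3: monoid_list d3_mult d3_one ..

lemma d3_prod_ones: "(\<And>a. a \<in> set as \<Longrightarrow> a = d3_one) \<Longrightarrow> d3.F as = d3_one"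
  by (induction as) simp_all

lemma d3_prod_concat: "d3.F (concat ass) = d3.F (map d3.F ass)"
  by (induction ass) simp_all

lemma d3_prod_upt_single:
  assumes "d < N" and "\<And>s. s < N \<Longrightarrow> s \<noteq> d \<Longrightarrow> f s = d3_one"
  shows "d3.F (map f [0..<N]) = f d"
proof -
  have "[0..<N] = [0..<d] @ d # [Suc d..<N]"
    using assms(1) upt_add_eq_append[of 0 d "N - d"] upt_conv_Cons[of d N] by simp
  moreover have "d3.F (map f [0..<d]) = d3_one" "d3.F (map f [Suc d..<N]) = d3_one"
    using assms by (auto intro!: d3_prod_ones)
  ultimately show ?thesis by simp
qed

lemma lin_eq_val_eq_prod: "lin_eq_val n a x = d3.F (map (\<lambda>j. d3_pow01 (a j) (x j)) [0..<n])"
  by (simp add: lin_eq_val_def d3.eq_foldr foldr_map o_def)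

lemma commutator_sig_rho: "d3_mult (d3_mult (d3_mult sig rho) sig) (d3_inv rho) = rho"
  by (simp add: d3_mult_def d3_inv_def rho_def sig_def)

lemma rho_neq_one: "rho \<noteq> d3_one"
  by (simp add: rho_def d3_one_def)

lemma sig_sig: "d3_mult sig sig = d3_one"
  by (simp add: d3_mult_def sig_def d3_one_def)

definition prog_eval :: "(nat \<times> D3) list \<Rightarrow> (nat \<Rightarrow> bool) \<Rightarrow> D3" where
  "prog_eval P b = d3.F (map (\<lambda>(g, c). d3_pow01 c (b g)) P)"

definition prog_inv :: "(nat \<times> D3) list \<Rightarrow> (nat \<times> D3) list" where
  "prog_inv P = rev (map (\<lambda>(g, c). (g, d3_inv c)) P)"

lemma prog_eval_Nil [simp]: "prog_eval [] b = d3_one"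
  and prog_eval_Cons [simp]: "prog_eval ((g, c) # P) b = d3_mult (d3_pow01 c (b g)) (prog_eval P b)"
  and prog_eval_append [simp]: "prog_eval (P @ Q) b = d3_mult (prog_eval P b) (prog_eval Q b)"
  by (simp_all add: prog_eval_def)

lemma prog_eval_inv [simp]: "prog_eval (prog_inv P) b = d3_inv (prog_eval P b)"
  by (induction P) (auto simp: prog_inv_def d3_pow01_def d3.inverse_distrib_swap)

text \<open>If bit \<open>k + 1\<close> is off, \<open>and_prog (k + 1)\<close> evaluates to \<open>A * A\<^sup>-\<^sup>1 = 1\<close>; if it is on,
  to the commutator \<open>sig * A * sig * A\<^sup>-\<^sup>1\<close>, which is \<open>A\<close> for \<open>A \<in> {1, rho}\<close>.\<close>

fun and_prog :: "nat \<Rightarrow> (nat \<times> D3) list" where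
  "and_prog 0 = [(0, rho)]"
| "and_prog (Suc k) = (Suc k, sig) # and_prog k @ (Suc k, sig) # prog_inv (and_prog k)"

lemma prog_eval_and_prog: "prog_eval (and_prog k) b = (if \<forall>g\<le>k. b g then rho else d3_one)"
proof (induction k)
  case 0
  then show ?case by (simp add: d3_pow01_def)
next
  case (Suc k)
  have "(\<forall>g\<le>Suc k. b g) \<longleftrightarrow> b (Suc k) \<and> (\<forall>g\<le>k. b g)"
    using le_Suc_eq by auto
  with Suc show ?case
    by (auto simp: d3_pow01_def commutator_sig_rho sig_sig d3.assoc[symmetric])
qed

lemma length_and_prog: "length (and_prog k) + 2 = 3 * 2 ^ k"
  by (induction k) (auto simp: prog_inv_def)

definition digit :: "nat \<Rightarrow> nat \<Rightarrow> nat \<Rightarrow> nat" where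
  "digit N i g = i div N ^ g mod N"

lemma digit_inj:
  assumes "i < N ^ K" "i' < N ^ K" "\<And>g. g < K \<Longrightarrow> digit N i g = digit N i' g"
  shows "i = i'"
  using assms
proof (induction K arbitrary: i i')
  case 0
  then show ?case by simp
next
  case (Suc K)
  then have "0 < N" by (cases "N = 0") auto
  with Suc.prems(1,2) have "i div N < N ^ K" "i' div N < N ^ K"
    by (auto simp: div_less_iff_less_mult mult.commute)
  moreover have "digit N (i div N) g = digit N (i' div N) g" if "g < K" for g
    using Suc.prems(3)[of "Suc g"] that by (simp add: digit_def div_mult2_eq)
  ultimately have "i div N = i' div N" using Suc.IH by blast
  moreover have "i mod N = i' mod N" using Suc.prems(3)[of 0] by (simp add: digit_def)
  ultimately show ?case by (metis div_mult_mod_eq)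
qed

text \<open>The variables \<open>l * N + s\<close> (\<open>s < N\<close>) form the block of instruction \<open>P ! l\<close>; it reads the
  digit of index \<open>fst (P ! l)\<close>.\<close>

definition encoded_eq :: "nat \<Rightarrow> (nat \<times> D3) list \<Rightarrow> nat \<Rightarrow> nat \<Rightarrow> D3" where
  "encoded_eq N P i p =
     (if p < length P * N \<and> p mod N = digit N i (fst (P ! (p div N))) then snd (P ! (p div N))
      else d3_one)"

definition encoded_point :: "nat \<Rightarrow> (nat \<times> D3) list \<Rightarrow> nat \<Rightarrow> nat \<Rightarrow> bool" where
  "encoded_point N P i p \<longleftrightarrow> p < length P * N \<and> p mod N = digit N i (fst (P ! (p div N)))"

lemma upt_mult_eq_concat_blocks:
  "[0..<L * N] = concat (map (\<lambda>l. map (\<lambda>s. l * N + s) [0..<N]) [0..<L])"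
proof (induction L)
  case 0
  then show ?case by simp
next
  case (Suc L)
  have "[0..<Suc L * N] = [0..<L * N] @ [L * N..<L * N + N]"
    using upt_add_eq_append[of 0 "L * N" N] by (simp add: add.commute)
  moreover have "[L * N..<L * N + N] = map (\<lambda>s. L * N + s) [0..<N]"
    using map_add_upt[of "L * N" N] by (simp add: add.commute)
  ultimately show ?case using Suc by simp
qed

lemma lin_eq_val_encoded:
  assumes "0 < N" and "length P * N \<le> n"
  shows "lin_eq_val n (encoded_eq N P i') (encoded_point N P i)
           = prog_eval P (\<lambda>g. digit N i' g = digit N i g)"
proof -
  define L where "L = length P"
  define b where "b = (\<lambda>g. digit N i' g = digit N i g)"
  define f where "f = (\<lambda>p. d3_pow01 (encoded_eq N P i' p) (encoded_point N P i p))"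
  have block: "d3.F (map (\<lambda>s. f (l * N + s)) [0..<N]) = d3_pow01 (snd (P ! l)) (b (fst (P ! l)))"
    if "l < L" for l
  proof -
    define d where "d = digit N i' (fst (P ! l))"
    have "Suc l * N \<le> L * N" using \<open>l < L\<close> by (intro mult_le_mono1) simp
    then have "l * N + s < L * N" if "s < N" for s
      using that by simp
    then have "f (l * N + s) = (if s = d then d3_pow01 (snd (P ! l)) (b (fst (P ! l))) else d3_one)"
      if "s < N" for s
      using that assms(1) by (auto simp: f_def encoded_eq_def encoded_point_def d3_pow01_def d_def b_def L_def)
    moreover have "d < N" using assms(1) by (simp add: d_def digit_def)
    ultimately show ?thesis by (subst d3_prod_upt_single[of d]) auto
  qed
  have tail: "d3.F (map f [L * N..<n]) = d3_one"
    by (rule d3_prod_ones) (auto simp: f_def encoded_eq_def encoded_point_def d3_pow01_def L_def)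
  have "[0..<n] = [0..<L * N] @ [L * N..<n]"
    using assms(2) upt_add_eq_append[of 0 "L * N" "n - L * N"] by (simp add: L_def)
  then have "lin_eq_val n (encoded_eq N P i') (encoded_point N P i) = d3.F (map f [0..<L * N])"
    using tail by (simp add: lin_eq_val_eq_prod f_def)
  also have "\<dots> = d3.F (map (\<lambda>l. d3.F (map (\<lambda>s. f (l * N + s)) [0..<N])) [0..<L])"
    by (simp add: upt_mult_eq_concat_blocks map_concat d3_prod_concat o_def)
  also have "\<dots> = d3.F (map (\<lambda>l. d3_pow01 (snd (P ! l)) (b (fst (P ! l)))) [0..<L])"
    using block by (intro arg_cong[of _ _ d3.F] map_cong) auto
  also have "\<dots> = prog_eval P b"
    unfolding prog_eval_def by (rule arg_cong[of _ _ d3.F], rule nth_equalityI) (auto simp: L_def split: prod.split)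
  finally show ?thesis by (simp add: b_def)
qed

lemma code_sparsifier_contains_isolated:
  assumes "eps < 1" and sp: "code_sparsifier eps n m C S w" and "i < m"
    and x: "\<forall>j. j \<ge> n \<longrightarrow> \<not> x j"
    and iso: "\<And>i'. i' < m \<Longrightarrow> lin_eq_val n (C i') x \<noteq> d3_one \<longleftrightarrow> i' = i"
  shows "i \<in> S"
proof (rule ccontr)
  assume "i \<notin> S"
  have "S \<subseteq> {..<m}" using sp by (simp add: code_sparsifier_def)
  with \<open>i \<notin> S\<close> iso have "(\<Sum>i'\<in>S. w i' * (if lin_eq_val n (C i') x \<noteq> d3_one then 1 else 0)) = 0"
    by (intro sum.neutral) auto
  moreover have "(1 - eps) * unsat_count n m C x
      \<le> (\<Sum>i'\<in>S. w i' * (if lin_eq_val n (C i') x \<noteq> d3_one then 1 else 0))"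
    using sp x unfolding code_sparsifier_def by blast
  moreover have "{i' \<in> {..<m}. lin_eq_val n (C i') x \<noteq> d3_one} = {i}"
    using iso \<open>i < m\<close> by auto
  then have "unsat_count n m C x = 1" by (simp add: unsat_count_def)
  ultimately show False using \<open>eps < 1\<close> by simp
qed

lemma code_sparsifier_card_ge:
  assumes "eps < 1" and sp: "code_sparsifier eps n m C S w"
    and "\<And>i j. i < m \<Longrightarrow> n \<le> j \<Longrightarrow> \<not> X i j"
    and "\<And>i i'. i < m \<Longrightarrow> i' < m \<Longrightarrow> lin_eq_val n (C i') (X i) \<noteq> d3_one \<longleftrightarrow> i' = i"
  shows "m \<le> card S"
proof -
  have "{..<m} \<subseteq> S"
  proof
    fix i assume "i \<in> {..<m}"
    then show "i \<in> S"
      by (intro code_sparsifier_contains_isolated[OF \<open>eps < 1\<close> sp, of i "X i"]) (use assms(3,4) in auto)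
  qed
  moreover have "finite S"
    using sp by (auto simp: code_sparsifier_def intro: finite_subset)
  ultimately show ?thesis
    using card_mono[of S "{..<m}"] by simp
qed

lemma hard_equation_system:
  fixes n k :: nat
  assumes "eps < 1"
  defines "m \<equiv> (n div length (and_prog k)) ^ (k + 1)"
  shows "\<exists>C. \<forall>S w. code_sparsifier eps n m C S w \<longrightarrow> m \<le> card S"
proof (cases "n div length (and_prog k) = 0")
  case True
  then show ?thesis by (simp add: m_def)
next
  case False
  define P where "P = and_prog k"
  define N where "N = n div length P"
  have "0 < N" and "length P * N \<le> n"
    using False by (simp_all add: N_def P_def)
  have "lin_eq_val n (encoded_eq N P i') (encoded_point N P i) \<noteq> d3_one \<longleftrightarrow> i' = i"
    if "i < m" "i' < m" for i i'
  proof -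
    have "lin_eq_val n (encoded_eq N P i') (encoded_point N P i) \<noteq> d3_one
            \<longleftrightarrow> (\<forall>g\<le>k. digit N i' g = digit N i g)"
      by (simp add: lin_eq_val_encoded[OF \<open>0 < N\<close> \<open>length P * N \<le> n\<close>]
          prog_eval_and_prog[of k, folded P_def] rho_neq_one)
    also have "\<dots> \<longleftrightarrow> i' = i"
      using digit_inj[of i' N "k + 1" i] that by (auto simp: m_def N_def P_def)
    finally show ?thesis .
  qed
  moreover have "\<not> encoded_point N P i j" if "n \<le> j" for i j
    using \<open>length P * N \<le> n\<close> that by (simp add: encoded_point_def)
  ultimately have "m \<le> card S" if "code_sparsifier eps n m (encoded_eq N P) S w" for S w
    using code_sparsifier_card_ge[OF assms(1) that] by blast
  then show ?thesis by blast
qed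

lemma length_and_prog_le_exp: "real (length (and_prog k)) \<le> 3 * exp (real k)"
proof -
  have "length (and_prog k) \<le> 3 * 2 ^ k"
    using length_and_prog[of k] by linarith
  then have "real (length (and_prog k)) \<le> 3 * 2 ^ k"
    by (metis of_nat_le_iff of_nat_mult of_nat_numeral of_nat_power)
  also have "(2::real) ^ k \<le> exp 1 ^ k"
    using exp_ge_add_one_self[of 1] by (intro power_mono) auto
  also have "exp 1 ^ k = exp (real k)"
    by (simp flip: exp_of_nat_mult)
  finally show ?thesis by simp
qed

lemma six_exp_le_exp_square:
  fixes t :: real
  assumes "5 \<le> t"
  shows "6 * exp (t + t\<^sup>2 / 2) \<le> exp (t\<^sup>2)"
proof -
  have "5 * (5 / 2 - 1) \<le> t * (t / 2 - 1)"
    using assms by (intro mult_mono) auto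
  then have "5 \<le> t\<^sup>2 / 2 - t" by (simp add: power2_eq_square algebra_simps)
  then have "6 \<le> exp (t\<^sup>2 / 2 - t)" using exp_ge_add_one_self[of "t\<^sup>2 / 2 - t"] by linarith
  then have "6 * exp (t + t\<^sup>2 / 2) \<le> exp (t\<^sup>2 / 2 - t) * exp (t + t\<^sup>2 / 2)" by simp
  also have "\<dots> = exp (t\<^sup>2)" by (simp flip: exp_add)
  finally show ?thesis .
qed

lemma sqrt_le_div_of_mult_le:
  fixes n L :: nat
  assumes "0 < L" and "real L * (sqrt (real n) + 1) \<le> real n"
  shows "sqrt (real n) \<le> real (n div L)"
proof -
  have "n < L * (n div L + 1)"
    using \<open>0 < L\<close> by (simp add: dividend_less_times_div)
  then have "real n < real L * (real (n div L) + 1)"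
    by (metis of_nat_1 of_nat_add of_nat_less_iff of_nat_mult)
  with assms have "real L * (sqrt (real n) + 1) < real L * (real (n div L) + 1)" by linarith
  with assms(1) show ?thesis by simp
qed

lemma powr_half_sqrt_ln_le_div_power:
  fixes n L :: nat
  assumes "25 \<le> ln (real n)" and "0 < L"
  defines "k \<equiv> nat \<lfloor>sqrt (ln (real n))\<rfloor>"
  assumes "real L \<le> 3 * exp (real k)"
  shows "real n powr (sqrt (ln (real n)) / 2) \<le> real (n div L) ^ (k + 1)"
proof -
  define t where "t = sqrt (ln (real n))"
  define s where "s = sqrt (real n)"
  have "5 \<le> t" using real_sqrt_le_mono[OF assms(1)] by (simp add: t_def)
  have "0 < real n" using assms(1) by (cases "n = 0") auto
  then have n_eq: "real n = exp (t\<^sup>2)" using assms(1) by (simp add: t_def)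
  have s_eq: "s = exp (t\<^sup>2 / 2)"
    unfolding s_def n_eq by (rule real_sqrt_unique) (simp_all add: power2_eq_square flip: exp_add)
  have "real k \<le> t" "t \<le> real k + 1"
    using \<open>5 \<le> t\<close> unfolding k_def t_def[symmetric] by linarith+
  have "real L * (s + 1) \<le> 3 * exp t * (2 * s)"
    using assms(4) \<open>real k \<le> t\<close> s_eq by (intro mult_mono) (auto intro: order_trans)
  also have "\<dots> = 6 * exp (t + t\<^sup>2 / 2)" by (simp add: s_eq exp_add)
  also have "\<dots> \<le> real n" using six_exp_le_exp_square[OF \<open>5 \<le> t\<close>] by (simp add: n_eq)
  finally have "s \<le> real (n div L)" using sqrt_le_div_of_mult_le[OF \<open>0 < L\<close>] by (simp add: s_def)
  have "real n powr (t / 2) = s powr t"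
    using \<open>0 < real n\<close> by (simp add: s_def powr_half_sqrt[symmetric] powr_powr)
  also have "\<dots> \<le> s powr (real (k + 1))"
    using \<open>t \<le> real k + 1\<close> s_eq by (intro powr_mono) auto
  also have "\<dots> = s ^ (k + 1)" using s_eq by (intro powr_realpow) simp
  also have "\<dots> \<le> real (n div L) ^ (k + 1)"
    using \<open>s \<le> real (n div L)\<close> s_eq by (intro power_mono) auto
  finally show ?thesis by (simp add: t_def)
qed


lemma exists_and_prog_block_power_ge:
  fixes n :: nat
  assumes "25 \<le> ln (real n)"
  shows "\<exists>k. real n powr (sqrt (ln (real n)) / 2) \<le> real ((n div length (and_prog k)) ^ (k + 1))"
proof -
  define k where "k = nat \<lfloor>sqrt (ln (real n))\<rfloor>"
  have "0 < length (and_prog k)" by (cases k) simp_all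
  then show ?thesis
    using powr_half_sqrt_ln_le_div_power[OF assms] length_and_prog_le_exp[of k]
    by (metis k_def of_nat_power)
qed

theorem mainTheorem3:
  fixes eps :: real and r :: "nat \<Rightarrow> real"
  assumes "0 < eps" "eps < 1"
    and "r \<in> o(\<lambda>n. sqrt (ln (real n)))"
  shows "\<exists>g :: nat \<Rightarrow> real. g \<longlonglongrightarrow> 0 \<and>
           (\<forall>n. \<exists>m (C :: nat \<Rightarrow> nat \<Rightarrow> D3).
              \<forall>S w. code_sparsifier eps n m C S w \<longrightarrow>
                real (card S) \<ge> real n powr (r n - g n))"
proof -
  define good where "good n \<longleftrightarrow> 25 \<le> ln (real n) \<and> r n \<le> sqrt (ln (real n)) / 2" for n
  \<comment> \<open>For the finitely many \<open>n\<close> that are not \<open>good\<close>, \<open>g\<close> cancels \<open>r\<close>, and the instance with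
    \<open>k = 0\<close> (\<open>n\<close> equations) suffices.\<close>
  define g where "g n = (if good n then 0 else r n)" for n
  have "eventually (\<lambda>n. \<bar>r n\<bar> \<le> 1 / 2 * \<bar>sqrt (ln (real n))\<bar>) at_top"
    using landau_o.smallD[OF assms(3), of "1 / 2"] by simp
  moreover have "eventually (\<lambda>n::nat. 25 \<le> ln (real n)) at_top" by real_asymp
  ultimately have "eventually good at_top"
    by eventually_elim (auto simp: good_def)
  then have "g \<longlonglongrightarrow> 0"
    by (intro tendsto_eventually) (auto simp: g_def elim: eventually_mono)
  moreover have "\<exists>k. real n powr (r n - g n) \<le> real ((n div length (and_prog k)) ^ (k + 1))" for n
  proof (cases "good n")
    case True
    have "1 \<le> real n" using True by (cases "n = 0") (auto simp: good_def)
    then have "real n powr (r n - g n) \<le> real n powr (sqrt (ln (real n)) / 2)"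
      using True by (intro powr_mono) (simp_all add: good_def g_def)
    then show ?thesis
      using exists_and_prog_block_power_ge True by (meson good_def order_trans)
  next
    case False
    then have "real n powr (r n - g n) \<le> real ((n div length (and_prog 0)) ^ (0 + 1))"
      by (simp add: g_def)
    then show ?thesis by blast
  qed
  ultimately show ?thesis
    using hard_equation_system[OF assms(2)] by (meson order_trans of_nat_le_iff)
qed

end
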